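(* Let $k\ge2$ and $\alpha\in(0,1]$. The moving average cross-over strategy $\mathrm{MA}[k]$ is universalizable both when the long/short allocation function is the line $g_\ell(x)=\frac{x+1}{2}$ and when, on each day $t\ge1$, it is the linear step approximation $g_{(t)}$ (with $g_{(1)}$ used on day $0$), where $g_{(t)}(x)=0$ for $x<-\frac1t$, $g_{(t)}(x)=\frac t2(x+\frac1t)$ for $-\frac1t\le x\le\frac1t$, and $g_{(t)}(x)=1$ for $x>\frac1t$.
   Context: Single-stock trading setting: $m=2$ assets, a long and a short position in one stock, with margin requirement $\alpha\in(0,1]$. On day $t$ the stock price changes by a factor $y_t\in(0,1+\alpha)$, and the return vector is $\mathbf x_t=(y_t,\,1+\frac{1-y_t}{\alpha})\in(0,\infty)^2$. On day $t$ a price-history vector $\mathbf v_t=(v_{t1},\dots,v_{tk})\in(0,1]^k$ is given ($v_{tj}$ the normalized price on day $t-j$). $\mathrm{MA}[k]$ has parameter space $\mathcal W_k^2$, where $\mathcal W_k=\{\mathbf w\in[0,1]^k:\sum_i w_i=1\}$, parameters $(\mathbf w_F,\mathbf w_S)$, and investment description $\mathrm{MA}_t(\mathbf w_F,\mathbf w_S)=\big(g((\mathbf w_F-\mathbf w_S)\cdot\mathbf v_t),\,1-g((\mathbf w_F-\mathbf w_S)\cdot\mathbf v_t)\big)$ for a long/short allocation function $g:[-1,1]\to[0,1]$. General notions: for an investment strategy $S$ with parameter space $\mathbb W=\mathcal W_k^\ell$ and descriptions $S_t(\mathbf w)\in\mathcal W_m$, $\mathcal R_n(S(\mathbf w))=\prod_{t=0}^{n-1}S_t(\mathbf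 w)\cdot\mathbf x_t$ ($\mathcal R_0\equiv1$), $\mathcal L_n=\frac1n\log\mathcal R_n$; for parameter-free $U$, $\mathcal R_n(U)=\prod_{t<n}U_t\cdot\mathbf x_t$, $\mathcal L_n(U)=\frac1n\log\mathcal R_n(U)$. $\mu$ is the uniform probability measure on $\mathbb W$ and $\mathcal U(S)$ is the strategy with $\mathcal U_t(S)=\int_{\mathbb W}S_t\mathcal R_t\,d\mu/\int_{\mathbb W}\mathcal R_t\,d\mu$. $U$ is a universalization of $S$ if there is $\eta_n\to0$, independent of market data, with $\mathcal L_n(U)\ge\sup_{\mathbf w}\mathcal L_n(S(\mathbf w))-\eta_n$ for all $n$ and all market data. For $\varepsilon\in(0,1)$ the $\varepsilon$-modification is $\bar S_t(\mathbf w)=(1-\frac{\varepsilon}{2(t+1)^2})S_t(\mathbf w)+\frac{\varepsilon}{2m(t+1)^2}(1,\dots,1)$. $S$ is universalizable if for every $\varepsilon\in(0,1)$, $\mathcal U(\bar S)$ is a universalization of $S$. *)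

theory Defs
  imports "HOL-Analysis.Analysis"
begin

(* Portfolios / return vectors for m = 2 assets are pairs (long, short). *)
definition ret :: "real \<times> real \<Rightarrow> real \<times> real \<Rightarrow> real" where
  "ret p x = fst p * fst x + snd p * snd x"

definition wealth :: "(nat \<Rightarrow> real \<times> real) \<Rightarrow> (nat \<Rightarrow> real \<times> real) \<Rightarrow> nat \<Rightarrow> real" where
  "wealth U x n = (\<Prod>t<n. ret (U t) (x t))"

definition growth :: "(nat \<Rightarrow> real \<times> real) \<Rightarrow> (nat \<Rightarrow> real \<times> real) \<Rightarrow> nat \<Rightarrow> real" where
  "growth U x n = ln (wealth U x n) / real n"

definition univ_strategy ::
  "'p measure \<Rightarrow> (nat \<Rightarrow> 'p \<Rightarrow> real \<times> real) \<Rightarrow> (nat \<Rightarrow> real \<times> real) \<Rightarrow> nat \<Rightarrow> real \<times> real" where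
  "univ_strategy \<mu> S x t =
     (let Z = (\<integral>w. wealth (\<lambda>s. S s w) x t \<partial>\<mu>)
      in ((\<integral>w. fst (S t w) * wealth (\<lambda>s. S s w) x t \<partial>\<mu>) / Z,
          (\<integral>w. snd (S t w) * wealth (\<lambda>s. S s w) x t \<partial>\<mu>) / Z))"

definition eps_mod :: "real \<Rightarrow> (nat \<Rightarrow> 'p \<Rightarrow> real \<times> real) \<Rightarrow> nat \<Rightarrow> 'p \<Rightarrow> real \<times> real" where
  "eps_mod \<epsilon> S t w =
     (let c = \<epsilon> / (2 * (real t + 1)^2)
      in ((1 - c) * fst (S t w) + c / 2, (1 - c) * snd (S t w) + c / 2))"

(* U is a universalization of S: D = admissible market data, X d = return vectors,
   W = parameter space, S d t w = investment description. eta independent of data. *)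
definition universalization ::
  "'d set \<Rightarrow> ('d \<Rightarrow> nat \<Rightarrow> real \<times> real) \<Rightarrow> 'p set \<Rightarrow> ('d \<Rightarrow> nat \<Rightarrow> 'p \<Rightarrow> real \<times> real)
     \<Rightarrow> ('d \<Rightarrow> nat \<Rightarrow> real \<times> real) \<Rightarrow> bool" where
  "universalization D X W S U \<longleftrightarrow>
     (\<exists>\<eta>::nat \<Rightarrow> real. \<eta> \<longlonglongrightarrow> 0 \<and>
        (\<forall>d\<in>D. \<forall>n\<ge>1. growth (U d) (X d) n \<ge> (SUP w\<in>W. growth (\<lambda>t. S d t w) (X d) n) - \<eta> n))"

definition universalizable ::
  "'d set \<Rightarrow> ('d \<Rightarrow> nat \<Rightarrow> real \<times> real) \<Rightarrow> 'p set \<Rightarrow> 'p measure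
     \<Rightarrow> ('d \<Rightarrow> nat \<Rightarrow> 'p \<Rightarrow> real \<times> real) \<Rightarrow> bool" where
  "universalizable D X W \<mu> S \<longleftrightarrow>
     (\<forall>\<epsilon>. 0 < \<epsilon> \<and> \<epsilon> < 1 \<longrightarrow>
        universalization D X W S (\<lambda>d. univ_strategy \<mu> (eps_mod \<epsilon> (S d)) (X d)))"

(* W_k, coordinates indexed 0..<k (standing for 1..k), zero outside *)
definition Wk :: "nat \<Rightarrow> (nat \<Rightarrow> real) set" where
  "Wk k = {w. (\<forall>i<k. 0 \<le> w i \<and> w i \<le> 1) \<and> (\<forall>i\<ge>k. w i = 0) \<and> (\<Sum>i<k. w i) = 1}"

(* chart: first k-1 coordinates *)
definition lower_simplex :: "nat \<Rightarrow> (nat \<Rightarrow> real) set" where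
  "lower_simplex k = {u \<in> space (Pi\<^sub>M {..<k-1} (\<lambda>_. lborel)).
      (\<forall>i<k-1. 0 \<le> u i) \<and> (\<Sum>i<k-1. u i) \<le> 1}"

definition lift_simplex :: "nat \<Rightarrow> (nat \<Rightarrow> real) \<Rightarrow> nat \<Rightarrow> real" where
  "lift_simplex k u = (\<lambda>i. if i < k - 1 then u i
                          else if i = k - 1 then 1 - (\<Sum>j<k-1. u j) else 0)"

(* uniform probability measure on W_k: image of the normalized Lebesgue measure on
   the (k-1)-dimensional chart under the affine bijection onto W_k *)
definition simplex_uniform :: "nat \<Rightarrow> (nat \<Rightarrow> real) measure" where
  "simplex_uniform k =
     distr (uniform_measure (Pi\<^sub>M {..<k-1} (\<lambda>_. lborel)) (lower_simplex k))
           (Pi\<^sub>M UNIV (\<lambda>_. borel)) (lift_simplex k)"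

definition param_uniform :: "nat \<Rightarrow> ((nat \<Rightarrow> real) \<times> (nat \<Rightarrow> real)) measure" where
  "param_uniform k = simplex_uniform k \<Otimes>\<^sub>M simplex_uniform k"

(* market data: (y, v), y t = price factor on day t, v t j = v_{t,j+1} *)
definition market_data :: "nat \<Rightarrow> real \<Rightarrow> ((nat \<Rightarrow> real) \<times> (nat \<Rightarrow> nat \<Rightarrow> real)) set" where
  "market_data k \<alpha> = {(y, v). (\<forall>t. 0 < y t \<and> y t < 1 + \<alpha>) \<and>
                               (\<forall>t j. j < k \<longrightarrow> 0 < v t j \<and> v t j \<le> 1)}"

definition ls_returns :: "real \<Rightarrow> (nat \<Rightarrow> real) \<times> (nat \<Rightarrow> nat \<Rightarrow> real) \<Rightarrow> nat \<Rightarrow> real \<times> real" where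
  "ls_returns \<alpha> d t = (fst d t, 1 + (1 - fst d t) / \<alpha>)"

definition MA :: "nat \<Rightarrow> (nat \<Rightarrow> real \<Rightarrow> real) \<Rightarrow> (nat \<Rightarrow> real) \<times> (nat \<Rightarrow> nat \<Rightarrow> real)
     \<Rightarrow> nat \<Rightarrow> (nat \<Rightarrow> real) \<times> (nat \<Rightarrow> real) \<Rightarrow> real \<times> real" where
  "MA k G d t w =
     (let s = (\<Sum>j<k. (fst w j - snd w j) * snd d t j)
      in (G t s, 1 - G t s))"

definition g_line :: "real \<Rightarrow> real" where
  "g_line x = (x + 1) / 2"

definition g_step :: "nat \<Rightarrow> real \<Rightarrow> real" where
  "g_step n x = (if x < - 1 / real n then 0
                 else if x \<le> 1 / real n then real n / 2 * (x + 1 / real n) else 1)"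

end

theory Submission
  imports Defs "HOL-Probability.Probability" "HOL-Real_Asymp.Real_Asymp"
begin

text \<open>
  Fix a parameter w = (a, b) of MA[k] and a horizon n, and let h be the homothety of
  W_k^2 with centre w and ratio r_n = \<epsilon> / (4 (n+1)^3). For every parameter in the image
  of h, the moving-average signal on each day t < n differs from that of w by at most 2 r_n;
  since the allocation function of day t is ((t+1)/2)-Lipschitz, the \<epsilon>-modified portfolio
  then earns at least the fraction 1 - \<epsilon> / (2 (t+1)^2) of the return of w, and these
  fractions multiply to at least 1/(n+1). The image of h has \<mu>-measure r_n^(2(k-1)), and the
  wealth of the universal strategy is the \<mu>-average of the wealths of the \<epsilon>-modified
  strategies. Hence the universal wealth is at least r_n^(2(k-1)) R_n(MA(w)) / (n+1), so its
  growth rate falls short of that of MA(w) by at most (ln(n+1) - 2(k-1) ln r_n) / n,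
  which tends to 0.
\<close>

section \<open>Affine images of Lebesgue measure\<close>

interpretation lborel_product: product_sigma_finite "\<lambda>_::nat. lborel :: real measure"
  by (simp add: product_sigma_finite_def lborel.sigma_finite_measure_axioms)

abbreviation lborel_pow :: "nat \<Rightarrow> (nat \<Rightarrow> real) measure" where
  "lborel_pow m \<equiv> PiM {..<m} (\<lambda>_. lborel)"

lemma emeasure_lborel_affine_vimage:
  fixes c l :: real
  assumes "0 < l" and "A \<in> sets borel"
  shows "emeasure lborel A = ennreal l * emeasure lborel ((\<lambda>x. c + l * x) -` A)"
proof -
  have "emeasure lborel A = emeasure (density (distr lborel borel (\<lambda>x. c + l * x)) (\<lambda>_. ennreal \<bar>l\<bar>)) A"
    using lborel_real_affine[of l c] assms(1) by simp
  also have "\<dots> = ennreal l * emeasure lborel ((\<lambda>x. c + l * x) -` A)"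
    using assms by (simp add: emeasure_density_const emeasure_distr)
  finally show ?thesis .
qed

lemma PiM_lborel_affine:
  fixes c :: "nat \<Rightarrow> real" and l :: real
  assumes "0 < l"
  shows "lborel_pow m =
    density (distr (lborel_pow m) (lborel_pow m) (\<lambda>u. \<lambda>i\<in>{..<m}. c i + l * u i)) (\<lambda>_. ennreal (l ^ m))"
proof -
  let ?\<psi> = "\<lambda>u. \<lambda>i\<in>{..<m}. c i + l * u i"
  have \<psi>_measurable: "?\<psi> \<in> lborel_pow m \<rightarrow>\<^sub>M lborel_pow m"
    by measurable
  show ?thesis
  proof (rule sym, rule lborel_product.PiM_eqI)
    fix A :: "nat \<Rightarrow> real set"
    assume A: "\<And>i. i \<in> {..<m} \<Longrightarrow> A i \<in> sets lborel"
    have box: "Pi\<^sub>E {..<m} A \<in> sets (lborel_pow m)"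
      using A by (intro sets_PiM_I_finite) auto
    have vimage: "?\<psi> -` Pi\<^sub>E {..<m} A \<inter> space (lborel_pow m) = Pi\<^sub>E {..<m} (\<lambda>i. (\<lambda>x. c i + l * x) -` A i)"
      by (auto simp: space_PiM PiE_def Pi_def extensional_def)
    have vimage_sets: "(\<lambda>x. c i + l * x) -` A i \<in> sets borel" if "i < m" for i
    proof -
      have "(\<lambda>x. c i + l * x) \<in> borel_measurable borel"
        by measurable
      from measurable_sets[OF this, of "A i"] A[of i] that show ?thesis
        by simp
    qed
    have "emeasure (density (distr (lborel_pow m) (lborel_pow m) ?\<psi>) (\<lambda>_. ennreal (l ^ m))) (Pi\<^sub>E {..<m} A)
        = ennreal (l ^ m) * emeasure (lborel_pow m) (?\<psi> -` Pi\<^sub>E {..<m} A \<inter> space (lborel_pow m))"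
      using box \<psi>_measurable by (simp add: emeasure_density_const emeasure_distr)
    also have "\<dots> = ennreal (l ^ m) * (\<Prod>i<m. emeasure lborel ((\<lambda>x. c i + l * x) -` A i))"
      unfolding vimage using vimage_sets by (subst lborel_product.emeasure_PiM) auto
    also have "\<dots> = (\<Prod>i<m. ennreal l * emeasure lborel ((\<lambda>x. c i + l * x) -` A i))"
      using \<open>0 < l\<close> by (simp add: prod.distrib ennreal_power)
    also have "\<dots> = (\<Prod>i<m. emeasure lborel (A i))"
      using A \<open>0 < l\<close> by (intro prod.cong refl emeasure_lborel_affine_vimage[symmetric]) auto
    finally show "emeasure (density (distr (lborel_pow m) (lborel_pow m) ?\<psi>) (\<lambda>_. ennreal (l ^ m))) (Pi\<^sub>E {..<m} A)
        = (\<Prod>i\<in>{..<m}. emeasure lborel (A i))" .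
  qed simp_all
qed

lemma nn_integral_PiM_lborel_affine:
  fixes c :: "nat \<Rightarrow> real" and l :: real
  assumes "0 < l" and [measurable]: "h \<in> borel_measurable (lborel_pow m)"
  shows "(\<integral>\<^sup>+u. h u \<partial>lborel_pow m) =
    ennreal (l ^ m) * (\<integral>\<^sup>+u. h (\<lambda>i\<in>{..<m}. c i + l * u i) \<partial>lborel_pow m)"
proof -
  let ?P = "lborel_pow m"
  let ?\<psi> = "\<lambda>u. \<lambda>i\<in>{..<m}. c i + l * u i"
  have [measurable]: "?\<psi> \<in> ?P \<rightarrow>\<^sub>M ?P"
    by measurable
  have "(\<integral>\<^sup>+u. h u \<partial>?P) = (\<integral>\<^sup>+u. h u \<partial>density (distr ?P ?P ?\<psi>) (\<lambda>_. ennreal (l ^ m)))"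
    using PiM_lborel_affine[OF \<open>0 < l\<close>, of m c] by simp
  also have "\<dots> = (\<integral>\<^sup>+u. ennreal (l ^ m) * h (?\<psi> u) \<partial>?P)"
    by (simp add: nn_integral_density nn_integral_distr)
  also have "\<dots> = ennreal (l ^ m) * (\<integral>\<^sup>+u. h (?\<psi> u) \<partial>?P)"
    by (simp add: nn_integral_cmult)
  finally show ?thesis .
qed

section \<open>The uniform measure on the simplex\<close>

abbreviation seq_borel :: "(nat \<Rightarrow> real) measure" where
  "seq_borel \<equiv> PiM UNIV (\<lambda>_. borel)"

definition homothety :: "(nat \<Rightarrow> real) \<Rightarrow> real \<Rightarrow> (nat \<Rightarrow> real) \<Rightarrow> nat \<Rightarrow> real" where
  "homothety a l x = (\<lambda>i. (1 - l) * a i + l * x i)"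

lemma homothety_measurable [measurable]: "homothety a l \<in> seq_borel \<rightarrow>\<^sub>M seq_borel"
  unfolding homothety_def by (rule measurable_PiM_single') (auto simp: space_PiM)

lemma Wk_sets [measurable]: "Wk k \<in> sets seq_borel"
proof -
  have "{x \<in> space seq_borel. x \<in> Wk k} \<in> sets seq_borel"
    unfolding Wk_def by measurable
  then show ?thesis
    by (simp add: space_PiM)
qed

lemma Wk_nonempty: "k \<ge> 1 \<Longrightarrow> Wk k \<noteq> {}"
  by (auto simp: Wk_def intro!: exI[of _ "\<lambda>i. if i = 0 then 1 else 0"])

lemma Wk_last:
  assumes "a \<in> Wk k" and "k \<ge> 1"
  shows "a (k - 1) = 1 - (\<Sum>j<k-1. a j)" and "(\<Sum>j<k-1. a j) \<le> 1"
proof -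
  have "1 = (\<Sum>j<Suc (k-1). a j)"
    using assms by (simp add: Wk_def)
  then show "a (k - 1) = 1 - (\<Sum>j<k-1. a j)"
    by simp
  moreover have "0 \<le> a (k - 1)"
    using assms by (simp add: Wk_def)
  ultimately show "(\<Sum>j<k-1. a j) \<le> 1"
    by simp
qed

lemma lower_simplex_sets [measurable]: "lower_simplex k \<in> sets (lborel_pow (k-1))"
proof -
  have "{u \<in> space (lborel_pow (k-1)). (\<forall>i\<in>{..<k-1}. 0 \<le> u i) \<and> (\<Sum>i<k-1. u i) \<le> 1}
      \<in> sets (lborel_pow (k-1))"
    by measurable
  then show ?thesis
    by (simp add: lower_simplex_def)
qed

lemma lower_simplex_subset_cube: "lower_simplex k \<subseteq> Pi\<^sub>E {..<k-1} (\<lambda>_. {0..1})"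
proof
  fix u
  assume u: "u \<in> lower_simplex k"
  then have nonneg: "\<forall>i<k-1. 0 \<le> u i" and sum_le: "(\<Sum>i<k-1. u i) \<le> 1"
    by (auto simp: lower_simplex_def)
  have "u i \<le> 1" if "i < k - 1" for i
    using member_le_sum[of i "{..<k-1}" u] nonneg sum_le that by auto
  with u nonneg show "u \<in> Pi\<^sub>E {..<k-1} (\<lambda>_. {0..1})"
    by (auto simp: lower_simplex_def space_PiM PiE_def Pi_def)
qed

lemma emeasure_lower_simplex_le_1: "emeasure (lborel_pow (k-1)) (lower_simplex k) \<le> 1"
proof -
  have "emeasure (lborel_pow (k-1)) (lower_simplex k)
      \<le> emeasure (lborel_pow (k-1)) (Pi\<^sub>E {..<k-1} (\<lambda>_. {0..1}))"
    by (rule emeasure_mono[OF lower_simplex_subset_cube]) (auto intro!: sets_PiM_I_finite)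
  also have "\<dots> = 1"
    by (simp add: lborel_product.emeasure_PiM)
  finally show ?thesis .
qed

lemma emeasure_lower_simplex_pos: "emeasure (lborel_pow (k-1)) (lower_simplex k) \<noteq> 0"
proof -
  define m where "m = k - 1"
  have cube: "Pi\<^sub>E {..<m} (\<lambda>_. {0..1 / (real m + 1)}) \<subseteq> lower_simplex k"
  proof
    fix u
    assume u: "u \<in> Pi\<^sub>E {..<m} (\<lambda>_. {0..1 / (real m + 1)})"
    have "(\<Sum>i<m. u i) \<le> (\<Sum>i<m. 1 / (real m + 1))"
      using u by (intro sum_mono) (auto simp: PiE_def Pi_def)
    also have "\<dots> \<le> 1"
      by (simp add: field_simps)
    finally show "u \<in> lower_simplex k"
      using u by (auto simp: lower_simplex_def space_PiM m_def PiE_def Pi_def)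
  qed
  have "0 < emeasure (lborel_pow m) (Pi\<^sub>E {..<m} (\<lambda>_. {0..1 / (real m + 1)}))"
    by (simp add: lborel_product.emeasure_PiM ennreal_power)
  also have "\<dots> \<le> emeasure (lborel_pow m) (lower_simplex k)"
    using cube lower_simplex_sets by (intro emeasure_mono) (auto simp: m_def)
  finally show ?thesis
    by (simp add: m_def)
qed

lemma lift_simplex_measurable [measurable]:
  "lift_simplex k \<in> lborel_pow (k-1) \<rightarrow>\<^sub>M seq_borel"
proof (rule measurable_PiM_single')
  show "(\<lambda>u. lift_simplex k u i) \<in> borel_measurable (lborel_pow (k-1))" for i
    by (cases "i < k - 1") (simp_all add: lift_simplex_def)
qed (simp add: space_PiM)

lemma lift_simplex_in_Wk:
  assumes "u \<in> lower_simplex k" and "k \<ge> 1"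
  shows "lift_simplex k u \<in> Wk k"
proof -
  obtain m where k: "k = Suc m"
    using assms(2) by (cases k) auto
  have nonneg: "\<forall>i<m. 0 \<le> u i" and sum_le: "(\<Sum>i<m. u i) \<le> 1" and le_1: "\<forall>i<m. u i \<le> 1"
    using assms(1) lower_simplex_subset_cube[of k] by (auto simp: lower_simplex_def k PiE_def Pi_def)
  have "0 \<le> (\<Sum>i<m. u i)"
    using nonneg by (intro sum_nonneg) auto
  have lift: "lift_simplex (Suc m) u i = (if i < m then u i else if i = m then 1 - (\<Sum>j<m. u j) else 0)" for i
    by (simp add: lift_simplex_def)
  have "(\<Sum>i<m. lift_simplex (Suc m) u i) = (\<Sum>i<m. u i)"
    by (intro sum.cong) (auto simp: lift)
  then show ?thesis
    using nonneg sum_le le_1 \<open>0 \<le> (\<Sum>i<m. u i)\<close> by (auto simp: Wk_def k lift less_Suc_eq)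
qed

lemma lift_simplex_homothety:
  assumes "a \<in> Wk k" and "k \<ge> 1"
  shows "lift_simplex k (\<lambda>i\<in>{..<k-1}. (1 - l) * a i + l * u i) = homothety a l (lift_simplex k u)"
proof
  fix i
  consider "i < k - 1" | "i = k - 1" | "k \<le> i"
    by linarith
  then show "lift_simplex k (\<lambda>i\<in>{..<k-1}. (1 - l) * a i + l * u i) i = homothety a l (lift_simplex k u) i"
  proof cases
    case 1
    then show ?thesis
      by (simp add: lift_simplex_def homothety_def)
  next
    case 2
    have "l * a (k - 1) + (\<Sum>j<k-1. l * a j) = l * (a (k - 1) + (\<Sum>j<k-1. a j))"
      by (simp add: sum_distrib_left distrib_left)
    also have "\<dots> = l"
      using Wk_last(1)[OF assms] by simp
    finally have "l * a (k - 1) + (\<Sum>j<k-1. l * a j) = l" .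
    with 2 Wk_last(1)[OF assms] show ?thesis
      by (simp add: lift_simplex_def homothety_def sum_subtractf sum.distrib sum_distrib_left algebra_simps)
  next
    case 3
    then have "\<not> i < k - 1" "i \<noteq> k - 1" "a i = 0"
      using assms by (auto simp: Wk_def)
    then show ?thesis
      by (simp add: lift_simplex_def homothety_def)
  qed
qed

lemma homothety_lower_simplex:
  assumes "a \<in> Wk k" and "k \<ge> 1" and "0 \<le> l" "l \<le> 1" and "u \<in> lower_simplex k"
  shows "(\<lambda>i\<in>{..<k-1}. (1 - l) * a i + l * u i) \<in> lower_simplex k"
proof -
  have u: "\<forall>i<k-1. 0 \<le> u i" "(\<Sum>i<k-1. u i) \<le> 1"
    using assms(5) by (auto simp: lower_simplex_def)
  have "(\<Sum>j<k-1. (1 - l) * a j + l * u j) = (1 - l) * (\<Sum>j<k-1. a j) + l * (\<Sum>j<k-1. u j)"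
    by (simp add: sum.distrib sum_distrib_left)
  also have "\<dots> \<le> (1 - l) * 1 + l * 1"
    using Wk_last(2)[OF assms(1,2)] u assms(3,4) by (intro add_mono mult_left_mono) auto
  finally show ?thesis
    using u assms(1,3,4) by (auto simp: lower_simplex_def space_PiM PiE_def extensional_def Wk_def)
qed

lemma sets_simplex_uniform [measurable_cong]: "sets (simplex_uniform k) = sets seq_borel"
  by (simp add: simplex_uniform_def)

lemma prob_space_simplex_uniform: "prob_space (simplex_uniform k)"
proof -
  have "emeasure (lborel_pow (k-1)) (lower_simplex k) \<noteq> \<infinity>"
    using emeasure_lower_simplex_le_1[of k] by (auto simp: top_unique)
  then have "prob_space (uniform_measure (lborel_pow (k-1)) (lower_simplex k))"
    using emeasure_lower_simplex_pos by (intro prob_space_uniform_measure)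
  then show ?thesis
    unfolding simplex_uniform_def by (rule prob_space.prob_space_distr) measurable
qed

lemma AE_simplex_uniform_Wk:
  assumes "k \<ge> 1"
  shows "AE x in simplex_uniform k. x \<in> Wk k"
  unfolding simplex_uniform_def
proof (subst AE_distr_iff)
  show "AE u in uniform_measure (lborel_pow (k-1)) (lower_simplex k). lift_simplex k u \<in> Wk k"
  proof (rule AE_uniform_measureI)
    show "AE u in lborel_pow (k-1). u \<in> lower_simplex k \<longrightarrow> lift_simplex k u \<in> Wk k"
      using assms by (auto intro!: AE_I2 lift_simplex_in_Wk)
  qed measurable
qed measurable

lemma nn_integral_simplex_uniform:
  assumes [measurable]: "h \<in> borel_measurable seq_borel"
  shows "(\<integral>\<^sup>+x. h x \<partial>simplex_uniform k) =
    (\<integral>\<^sup>+u. h (lift_simplex k u) * indicator (lower_simplex k) u \<partial>lborel_pow (k-1)) /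
      emeasure (lborel_pow (k-1)) (lower_simplex k)"
proof -
  have "(\<integral>\<^sup>+x. h x \<partial>simplex_uniform k)
      = (\<integral>\<^sup>+u. h (lift_simplex k u) \<partial>uniform_measure (lborel_pow (k-1)) (lower_simplex k))"
    unfolding simplex_uniform_def by (rule nn_integral_distr) measurable
  also have "\<dots> = (\<integral>\<^sup>+u. h (lift_simplex k u) * indicator (lower_simplex k) u \<partial>lborel_pow (k-1)) /
      emeasure (lborel_pow (k-1)) (lower_simplex k)"
    by (rule nn_integral_uniform_measure) measurable
  finally show ?thesis .
qed

text \<open>In the chart the homothety is an affine map of ratio l that maps the simplex into itself.\<close>

lemma nn_integral_simplex_uniform_homothety:
  assumes "k \<ge> 1" and "a \<in> Wk k" and "0 < l" "l \<le> 1"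
    and [measurable]: "h \<in> borel_measurable seq_borel"
  shows "ennreal (l ^ (k-1)) * (\<integral>\<^sup>+x. h (homothety a l x) \<partial>simplex_uniform k)
    \<le> (\<integral>\<^sup>+x. h x \<partial>simplex_uniform k)"
proof -
  let ?P = "lborel_pow (k-1)"
  let ?S = "lower_simplex k"
  let ?\<psi> = "\<lambda>u. \<lambda>i\<in>{..<k-1}. (1 - l) * a i + l * u i"
  define H where "H u = h (lift_simplex k u) * indicator ?S u" for u
  have H_measurable [measurable]: "H \<in> borel_measurable ?P"
    unfolding H_def by measurable
  have into: "h (homothety a l (lift_simplex k u)) * indicator ?S u \<le> H (?\<psi> u)" for u
    using homothety_lower_simplex[OF assms(2,1), of l u] lift_simplex_homothety[OF assms(2,1), of l u] assms(3,4)
    by (auto simp: H_def split: split_indicator)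
  have "ennreal (l ^ (k-1)) * (\<integral>\<^sup>+x. h (homothety a l x) \<partial>simplex_uniform k)
      = ennreal (l ^ (k-1)) * (\<integral>\<^sup>+u. h (homothety a l (lift_simplex k u)) * indicator ?S u \<partial>?P) / emeasure ?P ?S"
    by (simp add: nn_integral_simplex_uniform ennreal_times_divide)
  also have "\<dots> \<le> ennreal (l ^ (k-1)) * (\<integral>\<^sup>+u. H (?\<psi> u) \<partial>?P) / emeasure ?P ?S"
    by (intro divide_right_mono_ennreal mult_left_mono nn_integral_mono into) simp
  also have "\<dots> = (\<integral>\<^sup>+u. H u \<partial>?P) / emeasure ?P ?S"
    using nn_integral_PiM_lborel_affine[OF \<open>0 < l\<close> H_measurable, of "\<lambda>i. (1 - l) * a i"] by simp
  also have "\<dots> = (\<integral>\<^sup>+x. h x \<partial>simplex_uniform k)"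
    by (simp add: nn_integral_simplex_uniform H_def)
  finally show ?thesis .
qed

lemma sets_param_uniform [measurable_cong]: "sets (param_uniform k) = sets (seq_borel \<Otimes>\<^sub>M seq_borel)"
  unfolding param_uniform_def by (intro sets_pair_measure_cong sets_simplex_uniform)

lemma prob_space_param_uniform: "prob_space (param_uniform k)"
  unfolding param_uniform_def by (intro prob_space_pair prob_space_simplex_uniform)

lemma AE_param_uniform_Wk:
  assumes "k \<ge> 1"
  shows "AE w in param_uniform k. fst w \<in> Wk k \<and> snd w \<in> Wk k"
proof -
  interpret simplex: prob_space "simplex_uniform k"
    by (rule prob_space_simplex_uniform)
  interpret pair_sigma_finite "simplex_uniform k" "simplex_uniform k"
    by unfold_locales
  have W: "AE x in simplex_uniform k. x \<in> Wk k"
    by (rule AE_simplex_uniform_Wk[OF assms])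
  have "AE x in simplex_uniform k. AE y in simplex_uniform k. fst (x, y) \<in> Wk k \<and> snd (x, y) \<in> Wk k"
    using W by eventually_elim (use W in \<open>eventually_elim, simp\<close>)
  then show ?thesis
    unfolding param_uniform_def by (rule AE_pair_measure[rotated]) measurable
qed

lemma integrable_param_uniform_bounded:
  fixes B :: real
  assumes "k \<ge> 1" and "f \<in> borel_measurable (seq_borel \<Otimes>\<^sub>M seq_borel)"
    and "\<And>x y. x \<in> Wk k \<Longrightarrow> y \<in> Wk k \<Longrightarrow> \<bar>f (x, y)\<bar> \<le> B"
  shows "integrable (param_uniform k) f"
proof -
  interpret prob_space "param_uniform k"
    by (rule prob_space_param_uniform)
  have "AE w in param_uniform k. norm (f w) \<le> B"
    using AE_param_uniform_Wk[OF assms(1)] by eventually_elim (use assms(3) in \<open>auto simp: prod_eq_iff\<close>)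
  moreover have "f \<in> borel_measurable (param_uniform k)"
    using assms(2) by measurable
  ultimately show ?thesis
    by (rule integrable_const_bound)
qed

lemma nn_integral_param_uniform_homothety:
  assumes "k \<ge> 1" and "a \<in> Wk k" "b \<in> Wk k" and "0 < l" "l \<le> 1"
    and [measurable]: "F \<in> borel_measurable (seq_borel \<Otimes>\<^sub>M seq_borel)"
  shows "ennreal (l ^ (2 * (k-1))) * (\<integral>\<^sup>+w. F (homothety a l (fst w), homothety b l (snd w)) \<partial>param_uniform k)
    \<le> (\<integral>\<^sup>+w. F w \<partial>param_uniform k)"
proof -
  let ?M = "simplex_uniform k"
  interpret simplex: prob_space ?M
    by (rule prob_space_simplex_uniform)
  have pair_measurable: "borel_measurable (?M \<Otimes>\<^sub>M ?M) = borel_measurable (seq_borel \<Otimes>\<^sub>M seq_borel)"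
    by (rule measurable_cong_sets[OF sets_param_uniform[unfolded param_uniform_def] refl])
  have half_measurable: "borel_measurable (seq_borel \<Otimes>\<^sub>M ?M) = borel_measurable (seq_borel \<Otimes>\<^sub>M seq_borel)"
    by (intro measurable_cong_sets sets_pair_measure_cong sets_simplex_uniform refl)
  have l_pow: "ennreal (l ^ (2 * (k-1))) = ennreal (l ^ (k-1)) * ennreal (l ^ (k-1))"
    using \<open>0 < l\<close> by (metis ennreal_mult' mult_2 power_add zero_le_power less_imp_le)
  define g where "g x = (\<integral>\<^sup>+y. F (x, homothety b l y) \<partial>?M)" for x
  have [measurable]: "g \<in> borel_measurable seq_borel"
  proof -
    have "(\<lambda>w. F (fst w, homothety b l (snd w))) \<in> borel_measurable (seq_borel \<Otimes>\<^sub>M ?M)"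
      unfolding half_measurable by measurable
    from simplex.borel_measurable_nn_integral_fst[OF this] show ?thesis
      by (simp add: g_def[abs_def])
  qed
  have inner: "ennreal (l ^ (k-1)) * g x \<le> (\<integral>\<^sup>+y. F (x, y) \<partial>?M)" for x
    unfolding g_def
    by (rule nn_integral_simplex_uniform_homothety[OF assms(1,3,4,5)], rule measurable_Pair2[OF assms(6)])
      (simp add: space_PiM)
  have "(\<lambda>w. F (homothety a l (fst w), homothety b l (snd w))) \<in> borel_measurable (?M \<Otimes>\<^sub>M ?M)"
    unfolding pair_measurable by measurable
  from simplex.nn_integral_fst[OF this]
  have "ennreal (l ^ (2 * (k-1))) * (\<integral>\<^sup>+w. F (homothety a l (fst w), homothety b l (snd w)) \<partial>param_uniform k)
      = ennreal (l ^ (k-1)) * (ennreal (l ^ (k-1)) * (\<integral>\<^sup>+x. g (homothety a l x) \<partial>?M))"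
    unfolding l_pow by (simp add: param_uniform_def g_def mult.assoc)
  also have "\<dots> \<le> ennreal (l ^ (k-1)) * (\<integral>\<^sup>+x. g x \<partial>?M)"
    by (intro mult_left_mono nn_integral_simplex_uniform_homothety[OF assms(1,2,4,5)]) simp_all
  also have "\<dots> = (\<integral>\<^sup>+x. ennreal (l ^ (k-1)) * g x \<partial>?M)"
    by (simp add: nn_integral_cmult)
  also have "\<dots> \<le> (\<integral>\<^sup>+x. \<integral>\<^sup>+y. F (x, y) \<partial>?M \<partial>?M)"
    by (intro nn_integral_mono inner)
  also have "\<dots> = (\<integral>\<^sup>+w. F w \<partial>param_uniform k)"
    unfolding param_uniform_def by (rule simplex.nn_integral_fst) (simp add: pair_measurable)
  finally show ?thesis .
qed

lemma integral_param_uniform_ge_homothety: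
  assumes "k \<ge> 1" and "a \<in> Wk k" "b \<in> Wk k" and "0 < l" "l \<le> 1"
    and R: "integrable (param_uniform k) R" "AE w in param_uniform k. 0 \<le> R w"
    and c: "0 \<le> c" "\<And>x y. x \<in> Wk k \<Longrightarrow> y \<in> Wk k \<Longrightarrow> c \<le> R (homothety a l x, homothety b l y)"
  shows "l ^ (2 * (k-1)) * c \<le> (\<integral>w. R w \<partial>param_uniform k)"
proof -
  interpret prob_space "param_uniform k"
    by (rule prob_space_param_uniform)
  have [measurable]: "R \<in> borel_measurable (seq_borel \<Otimes>\<^sub>M seq_borel)"
    using borel_measurable_integrable[OF R(1)] measurable_cong_sets[OF sets_param_uniform refl] by blast
  have "AE w in param_uniform k. ennreal c \<le> ennreal (R (homothety a l (fst w), homothety b l (snd w)))"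
    using AE_param_uniform_Wk[OF assms(1)] by eventually_elim (use c in \<open>simp add: ennreal_leI\<close>)
  then have "(\<integral>\<^sup>+w. ennreal c \<partial>param_uniform k)
      \<le> (\<integral>\<^sup>+w. ennreal (R (homothety a l (fst w), homothety b l (snd w))) \<partial>param_uniform k)"
    by (rule nn_integral_mono_AE)
  then have "ennreal (l ^ (2 * (k-1))) * ennreal c
      \<le> ennreal (l ^ (2 * (k-1))) * (\<integral>\<^sup>+w. ennreal (R (homothety a l (fst w), homothety b l (snd w))) \<partial>param_uniform k)"
    by (intro mult_left_mono) (simp_all add: emeasure_space_1)
  also have "\<dots> \<le> (\<integral>\<^sup>+w. ennreal (R w) \<partial>param_uniform k)"
    by (rule nn_integral_param_uniform_homothety[OF assms(1-5)]) measurable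
  also have "\<dots> = ennreal (\<integral>w. R w \<partial>param_uniform k)"
    by (rule nn_integral_eq_integral[OF R])
  finally show ?thesis
    using \<open>0 < l\<close> c(1) integral_nonneg_AE[OF R(2)] by (simp add: ennreal_mult'[symmetric])
qed

section \<open>Wealth of the universal strategy\<close>

lemma wealth_univ_strategy:
  assumes "prob_space M"
    and "\<And>t. integrable M (\<lambda>w. fst (S t w) * wealth (\<lambda>s. S s w) x t)"
    and "\<And>t. integrable M (\<lambda>w. snd (S t w) * wealth (\<lambda>s. S s w) x t)"
    and "\<And>t. 0 < (\<integral>w. wealth (\<lambda>s. S s w) x t \<partial>M)"
  shows "wealth (univ_strategy M S x) x n = (\<integral>w. wealth (\<lambda>s. S s w) x n \<partial>M)"
proof (induction n)
  case 0
  interpret prob_space M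
    by (rule assms(1))
  show ?case
    by (simp add: wealth_def prob_space)
next
  case (Suc n)
  define Z where "Z = (\<integral>w. wealth (\<lambda>s. S s w) x n \<partial>M)"
  define A1 where "A1 = (\<integral>w. fst (S n w) * wealth (\<lambda>s. S s w) x n \<partial>M)"
  define A2 where "A2 = (\<integral>w. snd (S n w) * wealth (\<lambda>s. S s w) x n \<partial>M)"
  have "Z \<noteq> 0"
    using assms(4)[of n] by (simp add: Z_def)
  have "wealth (univ_strategy M S x) x (Suc n) = Z * (A1 / Z * fst (x n) + A2 / Z * snd (x n))"
    using Suc.IH by (simp add: wealth_def univ_strategy_def ret_def Z_def A1_def A2_def Let_def)
  also have "\<dots> = A1 * fst (x n) + A2 * snd (x n)"
    using \<open>Z \<noteq> 0\<close> by (simp add: field_simps)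
  also have "\<dots> = (\<integral>w. wealth (\<lambda>s. S s w) x (Suc n) \<partial>M)"
    using assms(2,3)[of n]
    by (simp add: A1_def A2_def wealth_def ret_def algebra_simps)
  finally show ?case .
qed

section \<open>Moving-average strategies\<close>

definition ma_signal ::
  "nat \<Rightarrow> (nat \<Rightarrow> real) \<times> (nat \<Rightarrow> nat \<Rightarrow> real) \<Rightarrow> nat \<Rightarrow> (nat \<Rightarrow> real) \<times> (nat \<Rightarrow> real) \<Rightarrow> real" where
  "ma_signal k d t w = (\<Sum>j<k. (fst w j - snd w j) * snd d t j)"

definition eps_weight :: "real \<Rightarrow> nat \<Rightarrow> real" where
  "eps_weight \<epsilon> t = \<epsilon> / (2 * (real t + 1)^2)"

lemma MA_eq: "MA k G d t w = (G t (ma_signal k d t w), 1 - G t (ma_signal k d t w))"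
  by (simp add: MA_def ma_signal_def Let_def)

lemma eps_mod_MA_eq:
  "eps_mod \<epsilon> (MA k G d) t w =
    ((1 - eps_weight \<epsilon> t) * G t (ma_signal k d t w) + eps_weight \<epsilon> t / 2,
     (1 - eps_weight \<epsilon> t) * (1 - G t (ma_signal k d t w)) + eps_weight \<epsilon> t / 2)"
  by (simp add: eps_mod_def MA_eq eps_weight_def Let_def)

lemma eps_weight_bounds:
  assumes "0 < \<epsilon>" "\<epsilon> < 1"
  shows "0 \<le> eps_weight \<epsilon> t" "eps_weight \<epsilon> t < 1"
proof -
  have "1 \<le> 2 * (real t + 1)^2"
    by (simp add: power2_eq_square algebra_simps)
  then show "0 \<le> eps_weight \<epsilon> t" "eps_weight \<epsilon> t < 1"
    using assms by (simp_all add: eps_weight_def field_simps)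
qed

lemma prod_one_minus_eps_weight_ge:
  assumes "0 < \<epsilon>" "\<epsilon> < 1"
  shows "1 / (real n + 1) \<le> (\<Prod>t<n. 1 - eps_weight \<epsilon> t)"
proof (induction n)
  case 0
  then show ?case
    by simp
next
  case (Suc n)
  have "eps_weight \<epsilon> n \<le> 1 / (real n + 2)"
  proof -
    have "real n + 2 \<le> 2 * (real n + 1)^2"
      by (simp add: power2_eq_square algebra_simps)
    then have "\<epsilon> * (real n + 2) \<le> 1 * (2 * (real n + 1)^2)"
      using assms by (intro mult_mono) auto
    then show ?thesis
      by (simp add: eps_weight_def field_simps)
  qed
  moreover have "0 \<le> (\<Prod>t<n. 1 - eps_weight \<epsilon> t)"
    using Suc.IH by (rule order.trans[rotated]) simp
  ultimately have "1 / (real n + 1) * (1 - 1 / (real n + 2)) \<le> (\<Prod>t<n. 1 - eps_weight \<epsilon> t) * (1 - eps_weight \<epsilon> n)"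
    using Suc.IH by (intro mult_mono) (auto simp: field_simps)
  then show ?case
    by (simp add: field_simps)
qed

lemma ret_eps_mod_ge:
  fixes c g g' :: real
  assumes "0 \<le> c" "c \<le> 1" and "0 \<le> g" "g \<le> 1" and "\<bar>g' - g\<bar> \<le> c / 2" and "0 < fst x" "0 < snd x"
  shows "(1 - c) * ret (g, 1 - g) x \<le> ret ((1 - c) * g' + c / 2, (1 - c) * (1 - g') + c / 2) x"
proof -
  have "\<bar>(1 - c) * (g' - g)\<bar> \<le> \<bar>g' - g\<bar>"
    using assms(1,2) by (simp add: abs_mult mult_left_le_one_le)
  then have "(1 - c) * g \<le> (1 - c) * g' + c / 2" "(1 - c) * (1 - g) \<le> (1 - c) * (1 - g') + c / 2"
    using assms(5) by (auto simp: abs_le_iff algebra_simps)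
  then have "(1 - c) * g * fst x + (1 - c) * (1 - g) * snd x
      \<le> ((1 - c) * g' + c / 2) * fst x + ((1 - c) * (1 - g') + c / 2) * snd x"
    using assms(6,7) by (intro add_mono mult_right_mono) auto
  then show ?thesis
    by (simp add: ret_def algebra_simps)
qed

lemma ls_returns_pos:
  assumes "d \<in> market_data k \<alpha>" and "0 < \<alpha>"
  shows "0 < fst (ls_returns \<alpha> d t)" "0 < snd (ls_returns \<alpha> d t)"
proof -
  have y: "0 < fst d t" "fst d t < 1 + \<alpha>"
    using assms(1) by (auto simp: market_data_def)
  then show "0 < fst (ls_returns \<alpha> d t)"
    by (simp add: ls_returns_def)
  have "-1 < (1 - fst d t) / \<alpha>"
    using y assms(2) by (simp add: field_simps)
  then show "0 < snd (ls_returns \<alpha> d t)"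
    by (simp add: ls_returns_def)
qed

lemma Wk_weighted_sum_bounds:
  assumes "w \<in> Wk k" and "\<forall>j<k. 0 < v j \<and> v j \<le> 1"
  shows "0 \<le> (\<Sum>j<k. w j * v j)" "(\<Sum>j<k. w j * v j) \<le> 1"
proof -
  show "0 \<le> (\<Sum>j<k. w j * v j)"
    using assms by (intro sum_nonneg) (auto simp: Wk_def)
  have "(\<Sum>j<k. w j * v j) \<le> (\<Sum>j<k. w j)"
    using assms by (intro sum_mono) (auto simp: Wk_def intro: mult_left_le)
  then show "(\<Sum>j<k. w j * v j) \<le> 1"
    using assms(1) by (simp add: Wk_def)
qed

lemma ma_signal_bound:
  assumes "d \<in> market_data k \<alpha>" and "fst w \<in> Wk k" "snd w \<in> Wk k"
  shows "\<bar>ma_signal k d t w\<bar> \<le> 1"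
proof -
  have v: "\<forall>j<k. 0 < snd d t j \<and> snd d t j \<le> 1"
    using assms(1) by (auto simp: market_data_def)
  have "ma_signal k d t w = (\<Sum>j<k. fst w j * snd d t j) - (\<Sum>j<k. snd w j * snd d t j)"
    by (simp add: ma_signal_def sum_subtractf left_diff_distrib)
  then show ?thesis
    using Wk_weighted_sum_bounds[OF assms(2) v] Wk_weighted_sum_bounds[OF assms(3) v] by linarith
qed

lemma ma_signal_homothety:
  "ma_signal k d t (homothety a l x, homothety b l y) = (1 - l) * ma_signal k d t (a, b) + l * ma_signal k d t (x, y)"
  by (simp add: ma_signal_def homothety_def sum_distrib_left sum.distrib[symmetric] algebra_simps)

lemma ma_signal_measurable [measurable]: "ma_signal k d t \<in> borel_measurable (seq_borel \<Otimes>\<^sub>M seq_borel)"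
  unfolding ma_signal_def by measurable

text \<open>The cube makes (t+1) r_n at most half the \<epsilon>-weight of every day t < n; by the Lipschitz bound
  on the allocation functions this bounds the change of allocation caused by the homothety.\<close>

definition homothety_ratio :: "real \<Rightarrow> nat \<Rightarrow> real" where
  "homothety_ratio \<epsilon> n = \<epsilon> / (4 * (real n + 1)^3)"

lemma homothety_ratio_bounds:
  assumes "0 < \<epsilon>" "\<epsilon> < 1"
  shows "0 < homothety_ratio \<epsilon> n" "homothety_ratio \<epsilon> n \<le> 1"
proof -
  have "1 \<le> 4 * (real n + 1)^3"
    using one_le_power[of "real n + 1" 3] by linarith
  then show "0 < homothety_ratio \<epsilon> n" "homothety_ratio \<epsilon> n \<le> 1"
    using assms by (simp_all add: homothety_ratio_def field_simps)
qed

lemma homothety_ratio_le_eps_weight: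
  assumes "0 < \<epsilon>" and "t < n"
  shows "(real t + 1) * homothety_ratio \<epsilon> n \<le> eps_weight \<epsilon> t / 2"
proof -
  define T where "T = real t + 1"
  have "0 < T"
    by (simp add: T_def)
  have "T * homothety_ratio \<epsilon> n \<le> T * (\<epsilon> / (4 * T ^ 3))"
    using assms unfolding homothety_ratio_def T_def
    by (intro mult_left_mono divide_left_mono mult_pos_pos power_mono) auto
  also have "\<dots> = \<epsilon> / (2 * T ^ 2) / 2"
    using \<open>0 < T\<close> by (simp add: field_simps power3_eq_cube power2_eq_square)
  finally show ?thesis
    by (simp add: T_def eps_weight_def)
qed

definition regret_bound :: "real \<Rightarrow> nat \<Rightarrow> nat \<Rightarrow> real" where
  "regret_bound \<epsilon> k n = (ln (real n + 1) - real (2 * (k-1)) * ln (homothety_ratio \<epsilon> n)) / real n"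

lemma regret_bound_tendsto_zero:
  assumes "0 < \<epsilon>"
  shows "regret_bound \<epsilon> k \<longlonglongrightarrow> 0"
  using assms unfolding regret_bound_def homothety_ratio_def by real_asymp

locale allocation_rule =
  fixes G :: "nat \<Rightarrow> real \<Rightarrow> real"
  assumes allocation_range: "\<And>t x. \<bar>x\<bar> \<le> 1 \<Longrightarrow> G t x \<in> {0..1}"
    and allocation_lipschitz: "\<And>t. ((real t + 1) / 2)-lipschitz_on UNIV (G t)"
begin

lemma allocation_measurable [measurable]: "G t \<in> borel_measurable borel"
  by (rule borel_measurable_continuous_onI, rule lipschitz_on_continuous_on[OF allocation_lipschitz])

lemma ret_MA_pos:
  assumes "d \<in> market_data k \<alpha>" and "0 < \<alpha>" and "fst w \<in> Wk k" "snd w \<in> Wk k"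
  shows "0 < ret (MA k G d t w) (ls_returns \<alpha> d t)"
proof -
  define g where "g = G t (ma_signal k d t w)"
  have "g \<in> {0..1}"
    unfolding g_def by (rule allocation_range, rule ma_signal_bound[OF assms(1,3,4)])
  then have "0 < g * fst (ls_returns \<alpha> d t) + (1 - g) * snd (ls_returns \<alpha> d t)"
    using ls_returns_pos[OF assms(1,2), of t]
    by (cases "g = 0") (auto intro: add_pos_nonneg)
  then show ?thesis
    by (simp add: MA_eq ret_def g_def)
qed

lemma wealth_MA_pos:
  assumes "d \<in> market_data k \<alpha>" and "0 < \<alpha>" and "fst w \<in> Wk k" "snd w \<in> Wk k"
  shows "0 < wealth (\<lambda>t. MA k G d t w) (ls_returns \<alpha> d) n"
  unfolding wealth_def using ret_MA_pos[OF assms] by (intro prod_pos) auto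

lemma eps_mod_MA_range:
  assumes "d \<in> market_data k \<alpha>" and "0 < \<epsilon>" "\<epsilon> < 1" and "fst w \<in> Wk k" "snd w \<in> Wk k"
  shows "fst (eps_mod \<epsilon> (MA k G d) t w) \<in> {0..1}" "snd (eps_mod \<epsilon> (MA k G d) t w) \<in> {0..1}"
proof -
  define g where "g = G t (ma_signal k d t w)"
  define c where "c = eps_weight \<epsilon> t"
  have "g \<in> {0..1}"
    unfolding g_def by (rule allocation_range, rule ma_signal_bound[OF assms(1,4,5)])
  moreover have "0 \<le> c" "c < 1"
    unfolding c_def using eps_weight_bounds[OF assms(2,3)] by auto
  ultimately have "(1 - c) * g \<le> 1 - c" "(1 - c) * (1 - g) \<le> 1 - c" "0 \<le> (1 - c) * g" "0 \<le> (1 - c) * (1 - g)"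
    by (auto intro: mult_left_le)
  with \<open>0 \<le> c\<close> show "fst (eps_mod \<epsilon> (MA k G d) t w) \<in> {0..1}" "snd (eps_mod \<epsilon> (MA k G d) t w) \<in> {0..1}"
    by (auto simp: eps_mod_MA_eq g_def c_def)
qed

lemma wealth_eps_mod_MA_bounds:
  assumes "d \<in> market_data k \<alpha>" and "0 < \<alpha>" and "0 < \<epsilon>" "\<epsilon> < 1" and "fst w \<in> Wk k" "snd w \<in> Wk k"
  shows "0 \<le> wealth (\<lambda>s. eps_mod \<epsilon> (MA k G d) s w) (ls_returns \<alpha> d) n"
    "wealth (\<lambda>s. eps_mod \<epsilon> (MA k G d) s w) (ls_returns \<alpha> d) n
      \<le> (\<Prod>s<n. fst (ls_returns \<alpha> d s) + snd (ls_returns \<alpha> d s))"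
proof -
  have "0 \<le> ret (eps_mod \<epsilon> (MA k G d) s w) (ls_returns \<alpha> d s)
      \<and> ret (eps_mod \<epsilon> (MA k G d) s w) (ls_returns \<alpha> d s) \<le> fst (ls_returns \<alpha> d s) + snd (ls_returns \<alpha> d s)" for s
    using eps_mod_MA_range[OF assms(1,3-6), of s] ls_returns_pos[OF assms(1,2), of s]
    by (auto simp: ret_def intro: add_mono mult_left_le_one_le)
  then show "0 \<le> wealth (\<lambda>s. eps_mod \<epsilon> (MA k G d) s w) (ls_returns \<alpha> d) n"
    "wealth (\<lambda>s. eps_mod \<epsilon> (MA k G d) s w) (ls_returns \<alpha> d) n
      \<le> (\<Prod>s<n. fst (ls_returns \<alpha> d s) + snd (ls_returns \<alpha> d s))"
    unfolding wealth_def by (auto intro: prod_nonneg prod_mono)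
qed

lemma eps_mod_MA_measurable [measurable]:
  "(\<lambda>w. fst (eps_mod \<epsilon> (MA k G d) t w)) \<in> borel_measurable (seq_borel \<Otimes>\<^sub>M seq_borel)"
  "(\<lambda>w. snd (eps_mod \<epsilon> (MA k G d) t w)) \<in> borel_measurable (seq_borel \<Otimes>\<^sub>M seq_borel)"
  unfolding eps_mod_MA_eq by measurable

lemma wealth_eps_mod_MA_measurable [measurable]:
  "(\<lambda>w. wealth (\<lambda>s. eps_mod \<epsilon> (MA k G d) s w) x n) \<in> borel_measurable (seq_borel \<Otimes>\<^sub>M seq_borel)"
  unfolding wealth_def ret_def by measurable

lemma ret_eps_mod_MA_homothety_ge:
  assumes "d \<in> market_data k \<alpha>" and "0 < \<alpha>" and "0 < \<epsilon>" "\<epsilon> < 1"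
    and "a \<in> Wk k" "b \<in> Wk k" "x \<in> Wk k" "y \<in> Wk k" and "t < n"
  defines "r \<equiv> homothety_ratio \<epsilon> n"
  shows "(1 - eps_weight \<epsilon> t) * ret (MA k G d t (a, b)) (ls_returns \<alpha> d t)
    \<le> ret (eps_mod \<epsilon> (MA k G d) t (homothety a r x, homothety b r y)) (ls_returns \<alpha> d t)"
proof -
  define s where "s = ma_signal k d t (a, b)"
  define s' where "s' = ma_signal k d t (homothety a r x, homothety b r y)"
  have r: "0 < r" "r \<le> 1"
    unfolding r_def using homothety_ratio_bounds[OF assms(3,4)] by auto
  have "\<bar>s\<bar> \<le> 1" "\<bar>ma_signal k d t (x, y)\<bar> \<le> 1"
    unfolding s_def using ma_signal_bound assms(1,5-8) by auto
  have "s' - s = r * (ma_signal k d t (x, y) - s)"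
    by (simp add: s'_def s_def ma_signal_homothety algebra_simps)
  then have "\<bar>s' - s\<bar> = r * \<bar>ma_signal k d t (x, y) - s\<bar>"
    using r by (simp add: abs_mult)
  also have "\<dots> \<le> r * 2"
    using \<open>\<bar>s\<bar> \<le> 1\<close> \<open>\<bar>ma_signal k d t (x, y)\<bar> \<le> 1\<close> r by (intro mult_left_mono) auto
  finally have "\<bar>s' - s\<bar> \<le> r * 2" .
  have "\<bar>G t s' - G t s\<bar> \<le> (real t + 1) / 2 * \<bar>s' - s\<bar>"
    using lipschitz_onD[OF allocation_lipschitz, of s' s t] by (simp add: dist_real_def)
  also have "\<dots> \<le> (real t + 1) / 2 * (r * 2)"
    using \<open>\<bar>s' - s\<bar> \<le> r * 2\<close> by (intro mult_left_mono) auto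
  also have "\<dots> \<le> eps_weight \<epsilon> t / 2"
    using homothety_ratio_le_eps_weight[OF assms(3,9)] by (simp add: r_def)
  finally have "\<bar>G t s' - G t s\<bar> \<le> eps_weight \<epsilon> t / 2" .
  moreover have "G t s \<in> {0..1}"
    using allocation_range \<open>\<bar>s\<bar> \<le> 1\<close> by blast
  ultimately show ?thesis
    using eps_weight_bounds[OF assms(3,4), of t] ls_returns_pos[OF assms(1,2), of t]
      ret_eps_mod_ge[of "eps_weight \<epsilon> t" "G t s" "G t s'" "ls_returns \<alpha> d t"]
    by (simp add: MA_eq eps_mod_MA_eq s_def s'_def)
qed

lemma wealth_eps_mod_MA_homothety_ge:
  fixes n :: nat
  assumes "d \<in> market_data k \<alpha>" and "0 < \<alpha>" and "0 < \<epsilon>" "\<epsilon> < 1"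
    and "a \<in> Wk k" "b \<in> Wk k" "x \<in> Wk k" "y \<in> Wk k"
  defines "r \<equiv> homothety_ratio \<epsilon> n"
  shows "wealth (\<lambda>t. MA k G d t (a, b)) (ls_returns \<alpha> d) n / (real n + 1)
    \<le> wealth (\<lambda>t. eps_mod \<epsilon> (MA k G d) t (homothety a r x, homothety b r y)) (ls_returns \<alpha> d) n"
proof -
  let ?X = "ls_returns \<alpha> d"
  have ret_pos: "0 < ret (MA k G d t (a, b)) (?X t)" for t
    using ret_MA_pos assms(1,2,5,6) by simp
  have "0 \<le> wealth (\<lambda>t. MA k G d t (a, b)) ?X n"
    using wealth_MA_pos assms(1,2,5,6) by (simp add: less_imp_le)
  then have "wealth (\<lambda>t. MA k G d t (a, b)) ?X n / (real n + 1)
      \<le> (\<Prod>t<n. 1 - eps_weight \<epsilon> t) * wealth (\<lambda>t. MA k G d t (a, b)) ?X n"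
    using mult_right_mono[OF prod_one_minus_eps_weight_ge[OF assms(3,4), of n]] by simp
  also have "\<dots> = (\<Prod>t<n. (1 - eps_weight \<epsilon> t) * ret (MA k G d t (a, b)) (?X t))"
    by (simp add: wealth_def prod.distrib)
  also have "\<dots> \<le> wealth (\<lambda>t. eps_mod \<epsilon> (MA k G d) t (homothety a r x, homothety b r y)) ?X n"
    unfolding wealth_def r_def using eps_weight_bounds[OF assms(3,4)] ret_pos
    by (intro prod_mono conjI ret_eps_mod_MA_homothety_ge assms mult_nonneg_nonneg) (auto simp: less_imp_le)
  finally show ?thesis .
qed

lemma integral_wealth_eps_mod_MA_ge:
  assumes "k \<ge> 1" and "d \<in> market_data k \<alpha>" and "0 < \<alpha>" and "0 < \<epsilon>" "\<epsilon> < 1"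
    and "a \<in> Wk k" "b \<in> Wk k"
  shows "homothety_ratio \<epsilon> n ^ (2 * (k-1)) * (wealth (\<lambda>t. MA k G d t (a, b)) (ls_returns \<alpha> d) n / (real n + 1))
    \<le> (\<integral>w. wealth (\<lambda>s. eps_mod \<epsilon> (MA k G d) s w) (ls_returns \<alpha> d) n \<partial>param_uniform k)"
proof (rule integral_param_uniform_ge_homothety[OF assms(1,6,7) homothety_ratio_bounds[OF assms(4,5)]])
  show "integrable (param_uniform k) (\<lambda>w. wealth (\<lambda>s. eps_mod \<epsilon> (MA k G d) s w) (ls_returns \<alpha> d) n)"
    by (rule integrable_param_uniform_bounded[OF assms(1), where B = "\<Prod>s<n. fst (ls_returns \<alpha> d s) + snd (ls_returns \<alpha> d s)"])
      (measurable, use wealth_eps_mod_MA_bounds[OF assms(2-5)] in \<open>auto simp: abs_le_iff\<close>)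
  show "AE w in param_uniform k. 0 \<le> wealth (\<lambda>s. eps_mod \<epsilon> (MA k G d) s w) (ls_returns \<alpha> d) n"
    using AE_param_uniform_Wk[OF assms(1)] by eventually_elim (use wealth_eps_mod_MA_bounds[OF assms(2-5)] in auto)
  show "0 \<le> wealth (\<lambda>t. MA k G d t (a, b)) (ls_returns \<alpha> d) n / (real n + 1)"
    using wealth_MA_pos[OF assms(2,3)] assms(6,7) by (simp add: less_imp_le)
qed (use wealth_eps_mod_MA_homothety_ge[OF assms(2-7)] in simp_all)

lemma wealth_univ_eps_mod_MA:
  assumes "k \<ge> 1" and "d \<in> market_data k \<alpha>" and "0 < \<alpha>" and "0 < \<epsilon>" "\<epsilon> < 1"
  shows "wealth (univ_strategy (param_uniform k) (eps_mod \<epsilon> (MA k G d)) (ls_returns \<alpha> d)) (ls_returns \<alpha> d) n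
    = (\<integral>w. wealth (\<lambda>s. eps_mod \<epsilon> (MA k G d) s w) (ls_returns \<alpha> d) n \<partial>param_uniform k)"
proof (rule wealth_univ_strategy[OF prob_space_param_uniform])
  let ?S = "eps_mod \<epsilon> (MA k G d)" and ?X = "ls_returns \<alpha> d"
  have bound: "\<bar>p * wealth (\<lambda>s. ?S s w) ?X t\<bar> \<le> (\<Prod>s<t. fst (?X s) + snd (?X s))"
    if "fst w \<in> Wk k" "snd w \<in> Wk k" "p \<in> {0..1}" for p w t
  proof -
    have "0 \<le> wealth (\<lambda>s. ?S s w) ?X t" "wealth (\<lambda>s. ?S s w) ?X t \<le> (\<Prod>s<t. fst (?X s) + snd (?X s))"
      using wealth_eps_mod_MA_bounds[OF assms(2-5) that(1,2)] by auto
    moreover have "p * wealth (\<lambda>s. ?S s w) ?X t \<le> wealth (\<lambda>s. ?S s w) ?X t"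
      using calculation that(3) by (intro mult_left_le_one_le) auto
    ultimately show ?thesis
      using that(3) by (simp add: abs_mult)
  qed
  show "integrable (param_uniform k) (\<lambda>w. fst (?S t w) * wealth (\<lambda>s. ?S s w) ?X t)" for t
    by (rule integrable_param_uniform_bounded[OF assms(1), where B = "\<Prod>s<t. fst (?X s) + snd (?X s)"])
      (measurable, use bound eps_mod_MA_range[OF assms(2,4,5)] in auto)
  show "integrable (param_uniform k) (\<lambda>w. snd (?S t w) * wealth (\<lambda>s. ?S s w) ?X t)" for t
    by (rule integrable_param_uniform_bounded[OF assms(1), where B = "\<Prod>s<t. fst (?X s) + snd (?X s)"])
      (measurable, use bound eps_mod_MA_range[OF assms(2,4,5)] in auto)
  show "0 < (\<integral>w. wealth (\<lambda>s. ?S s w) ?X t \<partial>param_uniform k)" for t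
  proof -
    obtain a where a: "a \<in> Wk k"
      using Wk_nonempty[OF assms(1)] by blast
    have "0 < wealth (\<lambda>s. MA k G d s (a, a)) ?X t"
      using wealth_MA_pos[OF assms(2,3)] a by simp
    then have "0 < homothety_ratio \<epsilon> t ^ (2 * (k-1)) * (wealth (\<lambda>s. MA k G d s (a, a)) ?X t / (real t + 1))"
      using homothety_ratio_bounds[OF assms(4,5)] by simp
    also have "\<dots> \<le> (\<integral>w. wealth (\<lambda>s. ?S s w) ?X t \<partial>param_uniform k)"
      by (rule integral_wealth_eps_mod_MA_ge[OF assms a a])
    finally show ?thesis .
  qed
qed

lemma growth_MA_le_growth_univ:
  assumes "k \<ge> 1" and "d \<in> market_data k \<alpha>" and "0 < \<alpha>" and "0 < \<epsilon>" "\<epsilon> < 1"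
    and "w \<in> Wk k \<times> Wk k" and "n \<ge> 1"
  shows "growth (\<lambda>t. MA k G d t w) (ls_returns \<alpha> d) n - regret_bound \<epsilon> k n
    \<le> growth (univ_strategy (param_uniform k) (eps_mod \<epsilon> (MA k G d)) (ls_returns \<alpha> d)) (ls_returns \<alpha> d) n"
proof -
  obtain a b where w: "w = (a, b)" "a \<in> Wk k" "b \<in> Wk k"
    using assms(6) by blast
  define c where "c = wealth (\<lambda>t. MA k G d t (a, b)) (ls_returns \<alpha> d) n"
  define r where "r = homothety_ratio \<epsilon> n"
  have "0 < c"
    unfolding c_def using wealth_MA_pos[OF assms(2,3)] w by simp
  have "0 < r"
    unfolding r_def using homothety_ratio_bounds[OF assms(4,5)] by simp
  have "ln c - (ln (real n + 1) - real (2 * (k-1)) * ln r) = ln (r ^ (2 * (k-1))) + (ln c - ln (real n + 1))"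
    using \<open>0 < r\<close> by (simp add: ln_realpow)
  also have "\<dots> = ln (r ^ (2 * (k-1)) * (c / (real n + 1)))"
    using \<open>0 < c\<close> \<open>0 < r\<close> by (simp add: ln_mult ln_div)
  also have "\<dots> \<le> ln (wealth (univ_strategy (param_uniform k) (eps_mod \<epsilon> (MA k G d)) (ls_returns \<alpha> d)) (ls_returns \<alpha> d) n)"
  proof (rule ln_mono)
    show "r ^ (2 * (k-1)) * (c / (real n + 1))
        \<le> wealth (univ_strategy (param_uniform k) (eps_mod \<epsilon> (MA k G d)) (ls_returns \<alpha> d)) (ls_returns \<alpha> d) n"
      unfolding c_def r_def wealth_univ_eps_mod_MA[OF assms(1-5)]
      by (rule integral_wealth_eps_mod_MA_ge[OF assms(1-5) w(2,3)])
    show "0 < r ^ (2 * (k-1)) * (c / (real n + 1))"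
      using \<open>0 < c\<close> \<open>0 < r\<close> by simp
  qed
  finally have "(ln c - (ln (real n + 1) - real (2 * (k-1)) * ln r)) / real n
      \<le> ln (wealth (univ_strategy (param_uniform k) (eps_mod \<epsilon> (MA k G d)) (ls_returns \<alpha> d)) (ls_returns \<alpha> d) n) / real n"
    using assms(7) by (intro divide_right_mono) auto
  then show ?thesis
    by (simp add: growth_def regret_bound_def w c_def r_def diff_divide_distrib)
qed

theorem universalizable_MA:
  assumes "k \<ge> 1" and "0 < \<alpha>"
  shows "universalizable (market_data k \<alpha>) (ls_returns \<alpha>) (Wk k \<times> Wk k) (param_uniform k) (MA k G)"
  unfolding universalizable_def universalization_def
proof (intro allI impI)
  fix \<epsilon> :: real
  assume "0 < \<epsilon> \<and> \<epsilon> < 1"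
  then have \<epsilon>: "0 < \<epsilon>" "\<epsilon> < 1"
    by auto
  have "(SUP w\<in>Wk k \<times> Wk k. growth (\<lambda>t. MA k G d t w) (ls_returns \<alpha> d) n) - regret_bound \<epsilon> k n
      \<le> growth (univ_strategy (param_uniform k) (eps_mod \<epsilon> (MA k G d)) (ls_returns \<alpha> d)) (ls_returns \<alpha> d) n"
    if d: "d \<in> market_data k \<alpha>" and n: "n \<ge> 1" for d n
  proof -
    have "(SUP w\<in>Wk k \<times> Wk k. growth (\<lambda>t. MA k G d t w) (ls_returns \<alpha> d) n)
        \<le> growth (univ_strategy (param_uniform k) (eps_mod \<epsilon> (MA k G d)) (ls_returns \<alpha> d)) (ls_returns \<alpha> d) n
          + regret_bound \<epsilon> k n"
    proof (rule cSUP_least)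
      show "Wk k \<times> Wk k \<noteq> {}"
        using Wk_nonempty[OF assms(1)] by simp
      show "growth (\<lambda>t. MA k G d t w) (ls_returns \<alpha> d) n
          \<le> growth (univ_strategy (param_uniform k) (eps_mod \<epsilon> (MA k G d)) (ls_returns \<alpha> d)) (ls_returns \<alpha> d) n
            + regret_bound \<epsilon> k n" if "w \<in> Wk k \<times> Wk k" for w
        using growth_MA_le_growth_univ[OF assms(1) d assms(2) \<epsilon> that n] by linarith
    qed
    then show ?thesis
      by linarith
  qed
  then show "\<exists>\<eta>. \<eta> \<longlonglongrightarrow> 0 \<and> (\<forall>d\<in>market_data k \<alpha>. \<forall>n\<ge>1.
      (SUP w\<in>Wk k \<times> Wk k. growth (\<lambda>t. MA k G d t w) (ls_returns \<alpha> d) n) - \<eta> n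
      \<le> growth (univ_strategy (param_uniform k) (eps_mod \<epsilon> (MA k G d)) (ls_returns \<alpha> d)) (ls_returns \<alpha> d) n)"
    using regret_bound_tendsto_zero[OF \<epsilon>(1)] by blast
qed

end

section \<open>The two allocation functions\<close>

interpretation line: allocation_rule "\<lambda>_. g_line"
proof
  show "g_line x \<in> {0..1}" if "\<bar>x\<bar> \<le> 1" for x
    using that by (auto simp: g_line_def)
  show "((real t + 1) / 2)-lipschitz_on UNIV g_line" for t
  proof (rule lipschitz_onI)
    fix x y :: real
    have "dist (g_line x) (g_line y) = 1 / 2 * dist x y"
      by (simp add: g_line_def dist_real_def diff_divide_distrib[symmetric] abs_divide)
    also have "\<dots> \<le> (real t + 1) / 2 * dist x y"
      by (intro mult_right_mono) auto
    finally show "dist (g_line x) (g_line y) \<le> (real t + 1) / 2 * dist x y" .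
  qed simp
qed

lemma g_step_eq_clamp:
  assumes "0 < N"
  shows "g_step N x = max 0 (min 1 (real N / 2 * (x + 1 / real N)))"
proof -
  have N: "0 < real N"
    using assms by simp
  have "real N / 2 * (x + 1 / real N) = (real N * x + 1) / 2"
    using N by (simp add: field_simps)
  moreover have "x < - 1 / real N \<longleftrightarrow> real N * x + 1 < 0"
    using N by (simp add: field_simps) linarith
  moreover have "x \<le> 1 / real N \<longleftrightarrow> real N * x + 1 \<le> 2"
    using N by (simp add: field_simps)
  ultimately show ?thesis
    unfolding g_step_def by (auto simp: max_def min_def)
qed

interpretation step: allocation_rule "\<lambda>t. g_step (max 1 t)"
proof
  fix t :: nat
  define N where "N = max 1 t"
  have N: "0 < N" "real N \<le> real t + 1"
    by (auto simp: N_def)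
  show "g_step (max 1 t) x \<in> {0..1}" for x
    using g_step_eq_clamp[OF N(1), of x] by (simp add: N_def)
  show "((real t + 1) / 2)-lipschitz_on UNIV (g_step (max 1 t))"
  proof (rule lipschitz_onI)
    fix x y :: real
    have "dist (g_step N x) (g_step N y) \<le> \<bar>real N / 2 * (x + 1 / real N) - real N / 2 * (y + 1 / real N)\<bar>"
      unfolding g_step_eq_clamp[OF N(1)] dist_real_def by (auto simp: max_def min_def abs_if)
    also have "\<dots> = \<bar>real N / 2 * (x - y)\<bar>"
      by (subst right_diff_distrib[symmetric]) simp
    also have "\<dots> = real N / 2 * dist x y"
      by (simp add: dist_real_def abs_mult)
    also have "\<dots> \<le> (real t + 1) / 2 * dist x y"
      using N by (intro mult_right_mono) auto
    finally show "dist (g_step (max 1 t) x) (g_step (max 1 t) y) \<le> (real t + 1) / 2 * dist x y"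
      by (simp add: N_def)
  qed simp
qed

theorem mainTheorem6:
  fixes k :: nat and \<alpha> :: real
  assumes "k \<ge> 2" and "0 < \<alpha>" and "\<alpha> \<le> 1"
  shows "universalizable (market_data k \<alpha>) (ls_returns \<alpha>) (Wk k \<times> Wk k)
           (param_uniform k) (MA k (\<lambda>t. g_line))
       \<and> universalizable (market_data k \<alpha>) (ls_returns \<alpha>) (Wk k \<times> Wk k)
           (param_uniform k) (MA k (\<lambda>t. g_step (max 1 t)))"
  using assms by (intro conjI line.universalizable_MA step.universalizable_MA) auto

end
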